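(* Let $n\ge 1$ and let $H$ be a subgroup of the cyclic group $\mathbb{Z}_n=\{0,1,\dots,n-1\}$. Let $a$ be the smallest positive integer whose residue modulo $n$ lies in $H$ (so $a\mid n$, $H=\langle a\rangle$, and $a=n$ if $H=\{0\}$), and let $o(a)=n/a$ be the order of $a$ in $\mathbb{Z}_n$. Then $\Gamma_{\mathbb{Z}_n,H}$ admits a perfect code if and only if one of the following holds: (1) $n$ is odd; (2) $n$ is even and $o(a)$ is odd; (3) $n$ is even and $o(a)=2$; (4) $n$ is even, $o(a)\ge 4$ is even, and $a$ is odd.
   Context: For a subgroup $H$ of a finite abelian group $A$ (written additively with identity $0$), the subgroup sum graph $\Gamma_{A,H}$ is the simple undirected graph with vertex set $A$ in which distinct vertices $x,y$ are adjacent if and only if $x+y\in H\setminus\{0\}$. A perfect code in a graph is a set $C$ of vertices that is independent and such that every vertex not in $C$ is adjacent to exactly one vertex of $C$. *)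

theory Defs
  imports Main
begin

text \<open>The cyclic group Z_n is modelled as the carrier {0..<n} of natural numbers with
addition modulo n.\<close>

definition Zn_subgroup :: "nat \<Rightarrow> nat set \<Rightarrow> bool" where
  "Zn_subgroup n H \<longleftrightarrow> H \<subseteq> {0..<n} \<and> 0 \<in> H \<and>
     (\<forall>x\<in>H. \<forall>y\<in>H. (x + y) mod n \<in> H) \<and> (\<forall>x\<in>H. (n - x) mod n \<in> H)"

definition sg_sum_adj :: "nat \<Rightarrow> nat set \<Rightarrow> nat \<Rightarrow> nat \<Rightarrow> bool" where
  "sg_sum_adj n H x y \<longleftrightarrow> x \<noteq> y \<and> (x + y) mod n \<in> H - {0}"

definition perfect_code :: "'a set \<Rightarrow> ('a \<Rightarrow> 'a \<Rightarrow> bool) \<Rightarrow> 'a set \<Rightarrow> bool" where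
  "perfect_code V adj C \<longleftrightarrow> C \<subseteq> V \<and> (\<forall>x\<in>C. \<forall>y\<in>C. \<not> adj x y) \<and>
     (\<forall>v\<in>V - C. \<exists>!c. c \<in> C \<and> adj v c)"

end

(*
  Write H = <a> and n = a * m.  Distinct x, y are adjacent iff a divides x + y but n does not,
  so every edge joins the residue class of r modulo a to that of -r, and between these classes
  only the pairs {x, -x} are missing.

  If a and m are both even, the class of a/2 is a union of components without fixed points of
  x |-> -x; on it the graph is the cocktail party graph on m >= 4 vertices, which has no perfect
  code.  Otherwise the elements within distance a/2 of 0 in Z_n form a perfect code; when a is
  even and m is odd, its two elements +-a/2 of the class of a/2 are replaced by n/2 = -n/2.
  Both codes are closed under x |-> -x; hence for v outside the code neither v nor -v is in it,
  and v is dominated exactly by the code elements in the class of -v.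
*)

theory Submission
  imports Defs
begin

section \<open>Subgroups of the cyclic group\<close>

definition multiples_below :: "nat \<Rightarrow> nat \<Rightarrow> nat set" where
  "multiples_below a n = {x. x < n \<and> a dvd x}"

lemma Zn_subgroup_pos:
  assumes "Zn_subgroup n H"
  shows "0 < n"
  using assms unfolding Zn_subgroup_def by auto

lemma Zn_subgroup_mult_mod:
  assumes "Zn_subgroup n H" "x mod n \<in> H"
  shows "(k * x) mod n \<in> H"
proof (induction k)
  case 0
  from assms(1) show ?case by (simp add: Zn_subgroup_def)
next
  case (Suc k)
  with assms have "((k * x) mod n + x mod n) mod n \<in> H"
    unfolding Zn_subgroup_def by blast
  then show ?case by (simp add: mod_add_eq add.commute)
qed

lemma Zn_subgroup_diff_mod:
  assumes H: "Zn_subgroup n H" and "y mod n \<in> H" "z mod n \<in> H" "z \<le> y"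
  shows "(y - z) mod n \<in> H"
proof -
  have "0 < n" using Zn_subgroup_pos[OF H] .
  have "(y mod n + (n - z mod n) mod n) mod n \<in> H"
    using assms unfolding Zn_subgroup_def by blast
  moreover have "(y mod n + (n - z mod n) mod n) mod n = (y - z) mod n"
  proof -
    have "z mod n < n" using \<open>0 < n\<close> by simp
    moreover have "n * Suc (z div n) = n * (z div n) + n" by simp
    ultimately have "y + (n - z mod n) = (y - z) + n * Suc (z div n)"
      using mult_div_mod_eq[of n z] \<open>z \<le> y\<close> by linarith
    then have "(y + (n - z mod n)) mod n = (y - z) mod n"
      by (simp only: mod_mult_self2)
    then show ?thesis by (simp only: mod_add_eq)
  qed
  ultimately show ?thesis by simp
qed

lemma Zn_subgroup_eq_multiples_below:
  assumes H: "Zn_subgroup n H"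
  defines "a \<equiv> LEAST k. 0 < k \<and> k mod n \<in> H"
  shows "0 < a" "a dvd n" "H = multiples_below a n"
proof -
  have "0 < n" using Zn_subgroup_pos[OF H] .
  have "0 \<in> H" "H \<subseteq> {0..<n}" using H unfolding Zn_subgroup_def by auto
  then have "0 < n \<and> n mod n \<in> H" using \<open>0 < n\<close> by simp
  then have a: "0 < a \<and> a mod n \<in> H" unfolding a_def by (rule LeastI)
  then show "0 < a" by simp
  have least: "a \<le> k" if "0 < k" "k mod n \<in> H" for k
    unfolding a_def using that by (simp add: Least_le)
  have dvd: "a dvd y" if "y mod n \<in> H" for y
  proof (rule ccontr)
    assume "\<not> a dvd y"
    then have "0 < y mod a" by (simp add: dvd_eq_mod_eq_0)
    have "(y div a * a) mod n \<in> H" using Zn_subgroup_mult_mod[OF H, of a "y div a"] a by simp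
    then have "(y - y div a * a) mod n \<in> H"
      using Zn_subgroup_diff_mod[OF H that] by simp
    then have "(y mod a) mod n \<in> H" by (simp add: minus_div_mult_eq_mod)
    then have "a \<le> y mod a" using least \<open>0 < y mod a\<close> by blast
    with \<open>0 < a\<close> show False using mod_less_divisor[of a y] by linarith
  qed
  show "a dvd n" using dvd[of n] \<open>0 \<in> H\<close> by simp
  show "H = multiples_below a n"
  proof
    show "H \<subseteq> multiples_below a n"
    proof
      fix x assume "x \<in> H"
      with \<open>H \<subseteq> {0..<n}\<close> have "x < n" by auto
      with \<open>x \<in> H\<close> show "x \<in> multiples_below a n"
        using dvd[of x] unfolding multiples_below_def by simp
    qed
    show "multiples_below a n \<subseteq> H"
    proof
      fix x assume "x \<in> multiples_below a n"
      then have "x < n" "a dvd x" unfolding multiples_below_def by auto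
      then obtain k where "x = a * k" by blast
      then show "x \<in> H" using Zn_subgroup_mult_mod[OF H, of a k] a \<open>x < n\<close> by (simp add: mult.commute)
    qed
  qed
qed

section \<open>Divisibility of sums of residues\<close>

lemma dvd_iff_eq_of_less_double:
  fixes n s :: nat
  assumes "0 < s" "s < 2 * n"
  shows "n dvd s \<longleftrightarrow> s = n"
proof
  assume "n dvd s"
  then obtain k where "s = n * k" by blast
  with assms have "0 < k" "k < 2" by auto
  then show "s = n" using \<open>s = n * k\<close> by (simp add: less_2_cases_iff)
qed simp

lemma dvd_le_imp_zero_or_eq:
  fixes a s :: nat
  assumes "a dvd s" "s \<le> a"
  shows "s = 0 \<or> s = a"
  using assms dvd_imp_le by fastforce

(* x = -y = z = -w (mod a) *)
lemma dvd_add_chain: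
  fixes a x y z w :: nat
  assumes "a dvd x + y" "a dvd y + z" "a dvd z + w"
  shows "a dvd x + w"
proof -
  have "a dvd (x + w) + (y + z)"
    using assms(1,3) by (metis dvd_add add.assoc add.commute add.left_commute)
  then show ?thesis using assms(2) by (simp add: dvd_add_left_iff)
qed

lemma eq_if_dvd_add_same:
  fixes a u v w :: nat
  assumes "a dvd u + w" "a dvd v + w" "u < a" "v < a"
  shows "u = v"
proof -
  have le: "u = v" if "a dvd u + w" "a dvd v + w" "v < a" "u \<le> v" for u v
  proof (rule ccontr)
    assume "u \<noteq> v"
    have "a dvd (v + w) - (u + w)" using dvd_diff_nat[OF that(2,1)] .
    then have "a dvd v - u" by simp
    moreover have "0 < v - u" "v - u < a" using that \<open>u \<noteq> v\<close> by auto
    ultimately show False using nat_dvd_not_less by blast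
  qed
  show ?thesis
  proof (cases "u \<le> v")
    case True
    then show ?thesis using le assms by blast
  next
    case False
    then show ?thesis using le[of v u] assms by simp
  qed
qed

lemma dvd_add_iff_eq_neg_mod:
  fixes n x y :: nat
  assumes "x < n" "y < n"
  shows "n dvd x + y \<longleftrightarrow> y = (n - x) mod n"
proof (cases "x = 0")
  case True
  then show ?thesis using assms by (auto dest: dvd_imp_le)
next
  case False
  then have "0 < x + y" "x + y < 2 * n" using assms by auto
  then have "n dvd x + y \<longleftrightarrow> x + y = n" by (rule dvd_iff_eq_of_less_double)
  then show ?thesis using assms False by auto
qed

lemma neg_mod_neg_mod:
  fixes n x :: nat
  assumes "x < n"
  shows "(n - (n - x) mod n) mod n = x"
  using assms by (cases "x = 0") auto

section \<open>Perfect codes\<close>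

lemma perfect_code_independent:
  "perfect_code V adj C \<Longrightarrow> x \<in> C \<Longrightarrow> y \<in> C \<Longrightarrow> \<not> adj x y"
  unfolding perfect_code_def by blast

lemma perfect_code_dominates:
  "perfect_code V adj C \<Longrightarrow> v \<in> V \<Longrightarrow> v \<notin> C \<Longrightarrow> \<exists>c\<in>C. adj v c"
  unfolding perfect_code_def by blast

lemma perfect_code_unique:
  "perfect_code V adj C \<Longrightarrow> v \<in> V \<Longrightarrow> v \<notin> C \<Longrightarrow> c \<in> C \<Longrightarrow> adj v c \<Longrightarrow> d \<in> C \<Longrightarrow> adj v d
    \<Longrightarrow> c = d"
  unfolding perfect_code_def by blast

lemma perfect_code_cong:
  assumes "\<And>x y. x \<in> V \<Longrightarrow> y \<in> V \<Longrightarrow> adj x y \<longleftrightarrow> adj' x y"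
  shows "perfect_code V adj C \<longleftrightarrow> perfect_code V adj' C"
proof (cases "C \<subseteq> V")
  case True
  then have "(\<lambda>c. c \<in> C \<and> adj v c) = (\<lambda>c. c \<in> C \<and> adj' v c)" if "v \<in> V" for v
    using assms that by blast
  then show ?thesis using True assms unfolding perfect_code_def by (simp add: subset_eq)
next
  case False
  then show ?thesis unfolding perfect_code_def by blast
qed

lemma perfect_code_restrict:
  assumes pc: "perfect_code V adj C" and "K \<subseteq> V"
    and closed: "\<And>x y. x \<in> K \<Longrightarrow> y \<in> V \<Longrightarrow> adj x y \<Longrightarrow> y \<in> K"
  shows "perfect_code K adj (C \<inter> K)"
  unfolding perfect_code_def
proof (intro conjI ballI)
  show "C \<inter> K \<subseteq> K" by blast
  show "\<not> adj x y" if "x \<in> C \<inter> K" "y \<in> C \<inter> K" for x y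
    using perfect_code_independent[OF pc] that by blast
  show "\<exists>!c. c \<in> C \<inter> K \<and> adj v c" if "v \<in> K - C \<inter> K" for v
  proof -
    from that \<open>K \<subseteq> V\<close> have v: "v \<in> V" "v \<notin> C" "v \<in> K" by auto
    then obtain c where "c \<in> C" "adj v c" using perfect_code_dominates[OF pc] by blast
    moreover have "c \<in> K" using closed[OF v(3) _ \<open>adj v c\<close>] pc \<open>c \<in> C\<close>
      unfolding perfect_code_def by blast
    ultimately show ?thesis using perfect_code_unique[OF pc v(1,2)] by blast
  qed
qed

lemma cocktail_party_no_perfect_code:
  assumes inv: "\<And>x. x \<in> K \<Longrightarrow> \<sigma> x \<in> K \<and> \<sigma> x \<noteq> x \<and> \<sigma> (\<sigma> x) = x"
    and third: "\<And>x. x \<in> K \<Longrightarrow> \<exists>w\<in>K. w \<noteq> x \<and> w \<noteq> \<sigma> x"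
    and "K \<noteq> {}"
  shows "\<not> perfect_code K (\<lambda>x y. x \<noteq> y \<and> y \<noteq> \<sigma> x) C"
proof
  assume pc: "perfect_code K (\<lambda>x y. x \<noteq> y \<and> y \<noteq> \<sigma> x) C"
  then have sub: "C \<subseteq> K" unfolding perfect_code_def by blast
  obtain c where "c \<in> C"
  proof -
    obtain x where "x \<in> K" using \<open>K \<noteq> {}\<close> by blast
    then show thesis
      using that perfect_code_dominates[OF pc \<open>x \<in> K\<close>] by (cases "x \<in> C") auto
  qed
  with sub inv have "\<sigma> c \<in> K" by blast
  show False
  proof (cases "\<sigma> c \<in> C")
    case True
    obtain w where w: "w \<in> K" "w \<noteq> c" "w \<noteq> \<sigma> c" using third \<open>c \<in> C\<close> sub by blast
    then have "w \<notin> C" using perfect_code_independent[OF pc \<open>c \<in> C\<close>, of w] by auto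
    have "c \<in> K" using \<open>c \<in> C\<close> sub by blast
    have "\<sigma> w \<noteq> \<sigma> c" "\<sigma> w \<noteq> c"
      using inv[OF w(1)] inv[OF \<open>c \<in> K\<close>] w(2,3) by metis+
    then have "c = \<sigma> c"
      using perfect_code_unique[OF pc w(1) \<open>w \<notin> C\<close> \<open>c \<in> C\<close> _ True] w by simp
    then show False using inv[OF \<open>c \<in> K\<close>] by simp
  next
    case False
    then obtain d where d: "d \<in> C" "\<sigma> c \<noteq> d" "d \<noteq> \<sigma> (\<sigma> c)"
      using perfect_code_dominates[OF pc \<open>\<sigma> c \<in> K\<close>] by blast
    then show False
      using perfect_code_independent[OF pc \<open>c \<in> C\<close> d(1)] inv \<open>c \<in> C\<close> sub by auto
  qed
qed

section \<open>The subgroup sum graph of a cyclic subgroup\<close>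

lemma sg_sum_adj_multiples_below:
  assumes "a dvd n" "0 < n"
  shows "sg_sum_adj n (multiples_below a n) x y \<longleftrightarrow> x \<noteq> y \<and> a dvd x + y \<and> \<not> n dvd x + y"
  unfolding sg_sum_adj_def multiples_below_def
  using dvd_mod_iff[OF assms(1), of "x + y"] assms(2) by (auto simp: dvd_eq_mod_eq_0)

lemma half_class_cocktail_party:
  fixes a h m :: nat and K :: "nat set"
  assumes "a = 2 * h" "0 < h" "even m" "4 \<le> m" and K_def: "K = {x. x < a * m \<and> a dvd x + h}"
  defines "n \<equiv> a * m"
  shows "\<And>x y. x \<in> K \<Longrightarrow> y \<in> K \<Longrightarrow>
           sg_sum_adj n (multiples_below a n) x y \<longleftrightarrow> x \<noteq> y \<and> y \<noteq> n - x"
    and "\<And>x. x \<in> K \<Longrightarrow> n - x \<in> K \<and> n - x \<noteq> x \<and> n - (n - x) = x"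
    and "\<And>x. x \<in> K \<Longrightarrow> \<exists>w\<in>K. w \<noteq> x \<and> w \<noteq> n - x"
    and "K \<noteq> {}"
proof -
  have "a dvd h + h" using assms(1) by (metis mult_2 dvd_refl)
  have "0 < n" "a dvd n" unfolding n_def using assms(1,2,4) by auto
  have K: "K = {x. x < n \<and> a dvd x + h}" unfolding K_def n_def ..
  have K_dvd: "a dvd x + y" if "x \<in> K" "y \<in> K" for x y
    using dvd_add_chain[of a x h h y] that \<open>a dvd h + h\<close> unfolding K by (simp add: add.commute)
  have K_pos: "0 < x" if "x \<in> K" for x
    using that assms(1,2) unfolding K by (auto dest: dvd_imp_le)
  show "sg_sum_adj n (multiples_below a n) x y \<longleftrightarrow> x \<noteq> y \<and> y \<noteq> n - x"
    if "x \<in> K" "y \<in> K" for x y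
  proof -
    have "0 < x + y" "x + y < 2 * n" using that K_pos unfolding K by auto
    then have "n dvd x + y \<longleftrightarrow> x + y = n" by (rule dvd_iff_eq_of_less_double)
    moreover have "y = n - x \<longleftrightarrow> x + y = n" using that unfolding K by auto
    ultimately show ?thesis
      using sg_sum_adj_multiples_below[OF \<open>a dvd n\<close> \<open>0 < n\<close>] K_dvd[OF that] by simp
  qed
  show "n - x \<in> K \<and> n - x \<noteq> x \<and> n - (n - x) = x" if "x \<in> K" for x
  proof -
    have "x < n" "0 < x" using that K_pos unfolding K by auto
    have "a dvd (n - x) + x" using \<open>a dvd n\<close> \<open>x < n\<close> by simp
    then have "n - x \<in> K"
      using dvd_add_chain[of a "n - x" x h h] that \<open>a dvd h + h\<close> \<open>0 < x\<close> unfolding K by simp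
    moreover have "x + x \<noteq> n"
    proof
      \<comment> \<open>since \<open>m\<close> is even, \<open>n/2\<close> is a multiple of \<open>a\<close> and so not congruent to \<open>a/2\<close>\<close>
      assume "x + x = n"
      with \<open>even m\<close> have "x = a * (m div 2)" unfolding n_def by auto
      then have "a dvd h" using that dvd_add_right_iff[of a x h] unfolding K by simp
      with assms(1,2) show False by (auto dest: dvd_imp_le)
    qed
    ultimately show ?thesis using \<open>x < n\<close> by auto
  qed
  have K_mult: "h + a * k \<in> K" if "h + a * k < n" for k
  proof -
    have "a dvd (h + h) + a * k" using \<open>a dvd h + h\<close> by simp
    then show ?thesis using that unfolding K by (simp add: ac_simps)
  qed
  have "h + a * 2 < n" using assms(1,2,4) unfolding n_def by simp
  then have K3: "h \<in> K" "h + a \<in> K" "h + a * 2 \<in> K" using K_mult[of 0] K_mult[of 1] K_mult[of 2] by auto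
  then show "K \<noteq> {}" by blast
  show "\<exists>w\<in>K. w \<noteq> x \<and> w \<noteq> n - x" for x
  proof -
    have "\<exists>w\<in>{h, h + a, h + a * 2}. w \<noteq> x \<and> w \<noteq> n - x" using assms(1,2) by auto
    then show ?thesis using K3 by blast
  qed
qed

lemma no_perfect_code_even_even:
  fixes a m :: nat and C :: "nat set"
  assumes "0 < a" "even a" "even m" "4 \<le> m"
  defines "n \<equiv> a * m"
  shows "\<not> perfect_code {0..<n} (sg_sum_adj n (multiples_below a n)) C"
proof
  assume pc: "perfect_code {0..<n} (sg_sum_adj n (multiples_below a n)) C"
  obtain h where h: "a = 2 * h" "0 < h" using assms(1,2) by auto
  have "0 < n" "a dvd n" unfolding n_def using assms by auto
  have "a dvd h + h" using h(1) by (metis mult_2 dvd_refl)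
  define K where "K = {x. x < n \<and> a dvd x + h}"
  note K = half_class_cocktail_party[OF h assms(3,4) K_def[unfolded n_def], folded n_def]
  have "perfect_code K (sg_sum_adj n (multiples_below a n)) (C \<inter> K)"
  proof (rule perfect_code_restrict[OF pc])
    show "K \<subseteq> {0..<n}" unfolding K_def by auto
    show "y \<in> K" if "x \<in> K" "y \<in> {0..<n}" "sg_sum_adj n (multiples_below a n) x y" for x y
      using that dvd_add_chain[of a y x h h] \<open>a dvd h + h\<close>
        sg_sum_adj_multiples_below[OF \<open>a dvd n\<close> \<open>0 < n\<close>]
      unfolding K_def by (simp add: add.commute)
  qed
  then have "perfect_code K (\<lambda>x y. x \<noteq> y \<and> y \<noteq> n - x) (C \<inter> K)"
    using perfect_code_cong[of K "sg_sum_adj n (multiples_below a n)" "\<lambda>x y. x \<noteq> y \<and> y \<noteq> n - x"]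
      K(1) by simp
  moreover have "\<not> perfect_code K (\<lambda>x y. x \<noteq> y \<and> y \<noteq> n - x) (C \<inter> K)"
    by (rule cocktail_party_no_perfect_code) (use K(2-4) in auto)
  ultimately show False by contradiction
qed

lemma neg_closed_code_unique:
  fixes a n v c d :: nat and C :: "nat set"
  assumes "a dvd n" "C \<subseteq> {0..<n}"
    and neg: "\<And>c. c \<in> C \<Longrightarrow> (n - c) mod n \<in> C"
    and indep: "\<And>c d. c \<in> C \<Longrightarrow> d \<in> C \<Longrightarrow> c \<noteq> d \<Longrightarrow> a dvd c + d \<Longrightarrow> n dvd c + d"
    and self: "\<And>c x. c \<in> C \<Longrightarrow> a dvd c + c \<Longrightarrow> \<not> n dvd c + c \<Longrightarrow> x < n \<Longrightarrow> a dvd x + c \<Longrightarrow> x \<in> C"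
    and v: "v < n" "v \<notin> C" and c: "c \<in> C" "a dvd v + c" and d: "d \<in> C" "a dvd v + d"
  shows "d = c"
proof -
  have lt: "x < n" if "x \<in> C" for x using assms(2) that by auto
  define c' where "c' = (n - c) mod n"
  have "c' \<in> C" "n dvd c + c'"
    unfolding c'_def using neg[OF c(1)] dvd_add_iff_eq_neg_mod[OF lt[OF c(1)]] lt[OF c(1)] by auto
  have "a dvd c + c'" using dvd_trans[OF \<open>a dvd n\<close> \<open>n dvd c + c'\<close>] .
  have "a dvd d + v" using d(2) by (simp add: add.commute)
  from dvd_add_chain[OF this c(2) \<open>a dvd c + c'\<close>] have "a dvd d + c'" .
  show "d = c"
  proof (cases "d = c'")
    case False
    with indep[OF d(1) \<open>c' \<in> C\<close> _ \<open>a dvd d + c'\<close>] have "n dvd c' + d" by (simp add: add.commute)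
    then show ?thesis
      using dvd_add_iff_eq_neg_mod[OF lt[OF \<open>c' \<in> C\<close>] lt[OF d(1)]] neg_mod_neg_mod[OF lt[OF c(1)]]
      unfolding c'_def by simp
  next
    case True
    show "d = c"
    proof (cases "n dvd c + c")
      case True
      then have "c' = c"
        using dvd_add_iff_eq_neg_mod[OF lt[OF c(1)] lt[OF c(1)]] unfolding c'_def by simp
      with \<open>d = c'\<close> show ?thesis by simp
    next
      case False
      \<comment> \<open>then \<open>v\<close> lies in the class of \<open>c = -c\<close>, which \<open>self\<close> puts into \<open>C\<close>\<close>
      have "a dvd c + v" "a dvd c' + c" using c(2) \<open>a dvd c + c'\<close> by (simp_all add: add.commute)
      with d(2) \<open>d = c'\<close> have "a dvd c + c" using dvd_add_chain[of a c v c' c] by simp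
      then have "v \<in> C" using self[OF c(1) _ False v(1)] c(2) by (simp add: add.commute)
      with v(2) show ?thesis by simp
    qed
  qed
qed

lemma perfect_code_multiples_belowI:
  fixes a n :: nat and C :: "nat set"
  assumes "a dvd n" "0 < n" and sub: "C \<subseteq> {0..<n}"
    and neg: "\<And>c. c \<in> C \<Longrightarrow> (n - c) mod n \<in> C"
    and indep: "\<And>c d. c \<in> C \<Longrightarrow> d \<in> C \<Longrightarrow> c \<noteq> d \<Longrightarrow> a dvd c + d \<Longrightarrow> n dvd c + d"
    and self: "\<And>c x. c \<in> C \<Longrightarrow> a dvd c + c \<Longrightarrow> \<not> n dvd c + c \<Longrightarrow> x < n \<Longrightarrow> a dvd x + c \<Longrightarrow> x \<in> C"
    and dom: "\<And>v. v < n \<Longrightarrow> v \<notin> C \<Longrightarrow> \<exists>c\<in>C. a dvd v + c"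
  shows "perfect_code {0..<n} (sg_sum_adj n (multiples_below a n)) C"
  unfolding perfect_code_def sg_sum_adj_multiples_below[OF assms(1,2)]
proof (intro conjI ballI)
  show "C \<subseteq> {0..<n}" by fact
  show "\<not> (x \<noteq> y \<and> a dvd x + y \<and> \<not> n dvd x + y)" if "x \<in> C" "y \<in> C" for x y
    using indep that by blast
  fix v assume "v \<in> {0..<n} - C"
  then have v: "v < n" "v \<notin> C" by auto
  obtain c where c: "c \<in> C" "a dvd v + c" using dom[OF v] by blast
  have "c < n" using sub c(1) by auto
  have "\<not> n dvd v + c"
  proof
    assume "n dvd v + c"
    then have "v = (n - c) mod n"
      using dvd_add_iff_eq_neg_mod[OF \<open>c < n\<close> v(1)] by (simp add: add.commute)
    with neg[OF c(1)] v(2) show False by simp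
  qed
  show "\<exists>!c. c \<in> C \<and> v \<noteq> c \<and> a dvd v + c \<and> \<not> n dvd v + c"
  proof (rule ex1I[of _ c])
    show "c \<in> C \<and> v \<noteq> c \<and> a dvd v + c \<and> \<not> n dvd v + c"
      using c v \<open>\<not> n dvd v + c\<close> by auto
    fix d assume "d \<in> C \<and> v \<noteq> d \<and> a dvd v + d \<and> \<not> n dvd v + d"
    then show "d = c"
      using neg_closed_code_unique[of a n C v c d] assms(1) sub neg indep self v c by blast
  qed
qed

definition near_zero :: "nat \<Rightarrow> nat \<Rightarrow> nat \<Rightarrow> bool" where
  "near_zero a n x \<longleftrightarrow> 2 * x \<le> a \<or> 2 * (n - x) \<le> a"

lemma near_zero_neg_mod:
  assumes "x < n" "near_zero a n x"
  shows "near_zero a n ((n - x) mod n)"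
proof (cases "x = 0")
  case True
  then show ?thesis unfolding near_zero_def by simp
next
  case False
  then have "(n - x) mod n = n - x" "n - (n - x) = x" using assms(1) by auto
  then show ?thesis using assms(2) unfolding near_zero_def by auto
qed

lemma near_zero_dvd_add:
  fixes a n x y :: nat
  assumes "a dvd n" "x < n" "y < n" "near_zero a n x" "near_zero a n y" "a dvd x + y"
  shows "x = y \<or> n dvd x + y"
proof -
  have "0 < a" using dvd_pos_nat[of n a] assms(1,2) by simp
  have mixed: "u + w = n" if "2 * u \<le> a" "w < n" "2 * (n - w) \<le> a" "a dvd u + w" for u w
  proof -
    have "a dvd (n - w) + w" using \<open>a dvd n\<close> \<open>w < n\<close> by simp
    moreover have "u < a" "n - w < a" using that \<open>0 < a\<close> by auto
    ultimately have "u = n - w" using eq_if_dvd_add_same[OF \<open>a dvd u + w\<close>] by blast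
    then show ?thesis using \<open>w < n\<close> by simp
  qed
  consider "2 * x \<le> a" "2 * y \<le> a" | "2 * x \<le> a" "2 * (n - y) \<le> a" | "2 * (n - x) \<le> a" "2 * y \<le> a"
    | "2 * (n - x) \<le> a" "2 * (n - y) \<le> a"
    using assms(4,5) unfolding near_zero_def by blast
  then show ?thesis
  proof cases
    case 1
    then have "x + y = 0 \<or> x + y = a" using dvd_le_imp_zero_or_eq[OF assms(6)] by simp
    with 1 show ?thesis by auto
  next
    case 2
    then show ?thesis using mixed[of x y] assms by simp
  next
    case 3
    then show ?thesis using mixed[of y x] assms by (simp add: add.commute)
  next
    case 4
    have "(x + y) + ((n - x) + (n - y)) = n + n" using assms(2,3) by simp
    moreover have "a dvd n + n" using assms(1) by simp
    ultimately have "a dvd (x + y) + ((n - x) + (n - y))" by (simp only:)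
    then have dvd: "a dvd (n - x) + (n - y)" using assms(6) by (simp only: dvd_add_right_iff)
    have "(n - x) + (n - y) \<le> a" using 4 by simp
    from dvd_le_imp_zero_or_eq[OF dvd this] have "(n - x) + (n - y) = a" using assms(2,3) by simp
    with 4 assms(2,3) have "x = y" by simp
    then show ?thesis ..
  qed
qed

lemma near_zero_dvd_double:
  fixes a n x :: nat
  assumes "a dvd n" "x < n" "near_zero a n x" "a dvd x + x"
  shows "x = 0 \<or> 2 * x = a \<or> 2 * (n - x) = a"
proof (cases "2 * x \<le> a")
  case True
  then have "x + x = 0 \<or> x + x = a" using dvd_le_imp_zero_or_eq[OF assms(4)] by simp
  then show ?thesis by auto
next
  case False
  then have "2 * (n - x) \<le> a" using assms(3) unfolding near_zero_def by simp
  have "(x + x) + ((n - x) + (n - x)) = n + n" using assms(2) by simp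
  then have "a dvd (x + x) + ((n - x) + (n - x))" using assms(1) by simp
  then have "a dvd (n - x) + (n - x)" using assms(4) by (simp add: dvd_add_right_iff)
  then have "(n - x) + (n - x) = 0 \<or> (n - x) + (n - x) = a"
    using dvd_le_imp_zero_or_eq[of a "(n - x) + (n - x)"] \<open>2 * (n - x) \<le> a\<close> by simp
  then show ?thesis using assms(2) by auto
qed

lemma near_zero_partner_exists:
  fixes a n v :: nat
  assumes "a dvd n" "v < n"
  shows "\<exists>c<n. near_zero a n c \<and> a dvd v + c"
proof -
  have "0 < a" "a \<le> n" using assms by (auto intro: Nat.gr0I dvd_imp_le)
  define r where "r = v mod a"
  have "r < a" "r \<le> v" "a dvd v - r" unfolding r_def using \<open>0 < a\<close> by (auto simp: minus_mod_eq_mult_div)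
  consider "r = 0" | "0 < r" "2 * r \<le> a" | "a < 2 * r" by linarith
  then show ?thesis
  proof cases
    case 1
    then show ?thesis using \<open>a dvd v - r\<close> assms(2) unfolding near_zero_def by (intro exI[of _ 0]) auto
  next
    case 2
    have "v + (n - r) = (v - r) + n" using \<open>r \<le> v\<close> \<open>r < a\<close> \<open>a \<le> n\<close> by simp
    then have "a dvd v + (n - r)" using \<open>a dvd v - r\<close> assms(1) by simp
    then show ?thesis using 2 \<open>r \<le> v\<close> \<open>r < a\<close> \<open>a \<le> n\<close> unfolding near_zero_def
      by (intro exI[of _ "n - r"]) auto
  next
    case 3
    have "v + (a - r) = (v - r) + a" using \<open>r \<le> v\<close> \<open>r < a\<close> by simp
    then have "a dvd v + (a - r)" using \<open>a dvd v - r\<close> by simp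
    then show ?thesis using 3 \<open>r < a\<close> \<open>a \<le> n\<close> unfolding near_zero_def
      by (intro exI[of _ "a - r"]) auto
  qed
qed

lemma near_zero_of_dvd_add_half:
  fixes a h n x :: nat
  assumes "a = 2 * h" "0 < h" "n \<le> 2 * a" "x < n" "a dvd x + h"
  shows "near_zero a n x"
proof -
  obtain k where k: "x + h = a * k" using assms(5) by blast
  have "a * k < a * 3" using k assms by linarith
  then have "k < 3" by simp
  moreover have "k \<noteq> 0" using k assms(2) by (cases k) auto
  ultimately consider "k = 1" | "k = 2" by linarith
  then show ?thesis by cases (use k assms(1,3) in \<open>auto simp: near_zero_def\<close>)
qed

lemma not_dvd_add_neg_mod:
  fixes a h n x :: nat
  assumes "a dvd n" "x < n" "a dvd h + h" "\<not> a dvd x + h"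
  shows "\<not> a dvd (n - x) mod n + h"
proof
  assume "a dvd (n - x) mod n + h"
  have "n dvd x + (n - x) mod n" using dvd_add_iff_eq_neg_mod[OF assms(2)] assms(2) by simp
  then have "a dvd x + (n - x) mod n" using assms(1) dvd_trans by blast
  from dvd_add_chain[OF this \<open>a dvd (n - x) mod n + h\<close> assms(3)] assms(4) show False by simp
qed

lemma near_zero_dvd_double_half:
  fixes a h n x :: nat
  assumes "a dvd n" "x < n" "near_zero a n x" "a dvd x + x" "a = 2 * h" "\<not> a dvd x + h"
  shows "n dvd x + x"
proof -
  have "2 * x \<noteq> a" using assms(4-6) by auto
  moreover have "2 * (n - x) \<noteq> a"
  proof
    assume "2 * (n - x) = a"
    then have "x + h = n" using assms(2,5) by simp
    with assms(1,6) show False by simp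
  qed
  ultimately have "x = 0" using near_zero_dvd_double[OF assms(1-4)] by simp
  then show ?thesis by simp
qed

lemma perfect_code_near_zero:
  fixes a n :: nat
  assumes "a dvd n" "0 < n" "odd a \<or> n \<le> 2 * a"
  shows "perfect_code {0..<n} (sg_sum_adj n (multiples_below a n)) {x. x < n \<and> near_zero a n x}"
    (is "perfect_code _ _ ?C")
proof (rule perfect_code_multiples_belowI[OF assms(1,2)])
  show "?C \<subseteq> {0..<n}" by auto
  show "(n - c) mod n \<in> ?C" if "c \<in> ?C" for c
    using that near_zero_neg_mod assms(2) by auto
  show "n dvd c + d" if "c \<in> ?C" "d \<in> ?C" "c \<noteq> d" "a dvd c + d" for c d
    using near_zero_dvd_add[OF assms(1)] that by blast
  show "\<exists>c\<in>?C. a dvd v + c" if "v < n" for v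
    using near_zero_partner_exists[OF assms(1) that] by auto
  show "x \<in> ?C" if c: "c \<in> ?C" "a dvd c + c" "\<not> n dvd c + c" and x: "x < n" "a dvd x + c" for c x
  proof -
    have "c \<noteq> 0" using c(3) by (cases c) auto
    then have "2 * c = a \<or> 2 * (n - c) = a" using near_zero_dvd_double[OF assms(1), of c] c by auto
    then obtain h where h: "a = 2 * h" "a dvd c + h"
    proof
      assume "2 * c = a"
      then show thesis using that[of c] c(2) by simp
    next
      assume "2 * (n - c) = a"
      then show thesis using that[of "n - c"] c(1) assms(1) by simp
    qed
    then have "n \<le> 2 * a" "0 < h" using assms(3) dvd_pos_nat[OF assms(2,1)] by auto
    have "a dvd h + h" using h(1) by (metis mult_2 dvd_refl)
    from dvd_add_chain[OF x(2) h(2) this] have "a dvd x + h" .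
    then show ?thesis using near_zero_of_dvd_add_half[OF h(1) \<open>0 < h\<close> \<open>n \<le> 2 * a\<close> x(1)] x(1) by simp
  qed
qed

lemma perfect_code_near_zero_half:
  fixes a h n z :: nat
  assumes "a dvd n" "0 < n" "a = 2 * h" "z + z = n" "a dvd z + h"
  shows "perfect_code {0..<n} (sg_sum_adj n (multiples_below a n))
           ({x. x < n \<and> near_zero a n x \<and> \<not> a dvd x + h} \<union> {z})"
    (is "perfect_code _ _ ?C")
proof (rule perfect_code_multiples_belowI[OF assms(1,2)])
  have "a dvd h + h" using assms(3) by (metis mult_2 dvd_refl)
  have "a dvd z + z" using assms(1,4) by simp
  have near: "x < n \<and> near_zero a n x \<and> \<not> a dvd x + h" if "x \<in> ?C" "x \<noteq> z" for x
    using that by auto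
  show "?C \<subseteq> {0..<n}" using assms(2,4) by auto
  show "(n - c) mod n \<in> ?C" if "c \<in> ?C" for c
  proof (cases "c = z")
    case True
    then have "(n - c) mod n = z" using assms(2,4) by simp
    then show ?thesis by simp
  next
    case False
    with near that have c: "c < n" "near_zero a n c" "\<not> a dvd c + h" by blast+
    then show ?thesis
      using near_zero_neg_mod[OF c(1,2)] not_dvd_add_neg_mod[OF assms(1) c(1) \<open>a dvd h + h\<close> c(3)] assms(2)
      by simp
  qed
  show "n dvd c + d" if cd: "c \<in> ?C" "d \<in> ?C" "c \<noteq> d" "a dvd c + d" for c d
  proof -
    consider "c = z" | "d = z" | "c \<noteq> z" "d \<noteq> z" by blast
    then show ?thesis
    proof cases
      case 1
      then have "a dvd d + h"
        using dvd_add_chain[of a d c c h] cd(4) \<open>a dvd z + z\<close> assms(5) by (simp add: add.commute)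
      then show ?thesis using near[OF cd(2)] cd(3) 1 by simp
    next
      case 2
      then have "a dvd c + h" using dvd_add_chain[of a c d d h] cd(4) \<open>a dvd z + z\<close> assms(5) by simp
      then show ?thesis using near[OF cd(1)] cd(3) 2 by simp
    next
      case 3
      then show ?thesis using near_zero_dvd_add[OF assms(1)] near[OF cd(1)] near[OF cd(2)] cd(3,4)
        by blast
    qed
  qed
  show "x \<in> ?C" if c: "c \<in> ?C" "a dvd c + c" "\<not> n dvd c + c" for c x
  proof -
    have "c \<noteq> z" using c(3) assms(4) by auto
    with near c(1) have "c < n" "near_zero a n c" "\<not> a dvd c + h" by blast+
    with near_zero_dvd_double_half[OF assms(1) _ _ c(2) assms(3)] c(3) show ?thesis by blast
  qed
  show "\<exists>c\<in>?C. a dvd v + c" if "v < n" for v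
  proof (cases "a dvd v + h")
    case True
    then have "a dvd v + z"
      using dvd_add_chain[of a v h h z] \<open>a dvd h + h\<close> assms(5) by (simp add: add.commute)
    then show ?thesis by blast
  next
    case False
    obtain c where c: "c < n" "near_zero a n c" "a dvd v + c"
      using near_zero_partner_exists[OF assms(1) \<open>v < n\<close>] by blast
    have "\<not> a dvd c + h" using dvd_add_chain[of a v c h h] c(3) \<open>a dvd h + h\<close> False by blast
    then show ?thesis using c by blast
  qed
qed

lemma perfect_code_exists_iff:
  fixes a m :: nat
  assumes "0 < a" "0 < m"
  shows "(\<exists>C. perfect_code {0..<a * m} (sg_sum_adj (a * m) (multiples_below a (a * m))) C)
    \<longleftrightarrow> \<not> (even a \<and> even m \<and> 4 \<le> m)"
proof
  assume "\<exists>C. perfect_code {0..<a * m} (sg_sum_adj (a * m) (multiples_below a (a * m))) C"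
  then show "\<not> (even a \<and> even m \<and> 4 \<le> m)" using no_perfect_code_even_even[OF assms(1)] by blast
next
  assume *: "\<not> (even a \<and> even m \<and> 4 \<le> m)"
  have "a dvd a * m" "0 < a * m" using assms by auto
  show "\<exists>C. perfect_code {0..<a * m} (sg_sum_adj (a * m) (multiples_below a (a * m))) C"
  proof (cases "even a \<and> odd m")
    case True
    then obtain h k where h: "a = 2 * h" and k: "m = 2 * k + 1" by (blast elim: evenE oddE)
    have "h * m + h * m = a * m" "a dvd h * m + h" using h k by (simp_all add: algebra_simps)
    then show ?thesis
      using perfect_code_near_zero_half[OF \<open>a dvd a * m\<close> \<open>0 < a * m\<close> h] by blast
  next
    case False
    have "m \<noteq> 3" if "even m" using that by presburger
    with * False have "odd a \<or> m \<le> 2" by auto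
    then have "odd a \<or> a * m \<le> 2 * a" by (auto simp: mult.commute)
    then show ?thesis using perfect_code_near_zero[OF \<open>a dvd a * m\<close> \<open>0 < a * m\<close>] by blast
  qed
qed

theorem theorem3p9:
  fixes n a :: nat and H :: "nat set"
  assumes "n \<ge> 1" and "Zn_subgroup n H"
  defines "a \<equiv> (LEAST k::nat. 0 < k \<and> k mod n \<in> H)"
  shows "(\<exists>C. perfect_code {0..<n} (sg_sum_adj n H) C) \<longleftrightarrow>
           odd n
         \<or> (even n \<and> odd (n div a))
         \<or> (even n \<and> n div a = 2)
         \<or> (even n \<and> n div a \<ge> 4 \<and> even (n div a) \<and> odd a)"
proof -
  note a = Zn_subgroup_eq_multiples_below[OF assms(2), folded a_def]
  define m where "m = n div a"
  have n: "n = a * m" unfolding m_def using a(2) by simp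
  then have "0 < m" using assms(1) by (cases m) auto
  have "(\<exists>C. perfect_code {0..<n} (sg_sum_adj n H) C) \<longleftrightarrow> \<not> (even a \<and> even m \<and> 4 \<le> m)"
    using perfect_code_exists_iff[OF a(1) \<open>0 < m\<close>] n a(3) by simp
  moreover have "even n \<longleftrightarrow> even a \<or> even m" using n by simp
  moreover have "m = 2 \<or> 4 \<le> m" if "even m" using that \<open>0 < m\<close> by presburger
  ultimately show ?thesis unfolding m_def[symmetric] by auto
qed

end
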